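(* Let $s$ be a non-empty string with $r$ maximal runs. Every admissible bilateral run-peeling decomposition of $s$ emits at least $\lceil r/2\rceil$ tokens, and the Flashback decomposition attains this minimum: the number of tokens of $\mathcal{F}(s)$ other than the sentinel token $\tau_0=(\texttt{@}\texttt{\$},1)$ is exactly $\lceil r/2\rceil$.
   Context: A maximal run of a string is a maximal block of consecutive equal symbols. An admissible bilateral run-peeling decomposition of a non-empty string $s$ is obtained by repeatedly applying the following rule to an active span (initially all of $s$) until it is consumed: (Termination) if the active span consists of a single run or of two adjacent runs, emit one terminal token for the span and stop; (Peeling step) otherwise, let $L$ be the length of the span's leading run (longest prefix of one repeated symbol) and $R$ the length of its trailing run (longest suffix of one repeated symbol), choose any integers $x\in\{1,\dots,L\}$ and $y\in\{1,\dots,R\}$, emit one token formed by the peeled prefix of length $x$ and the peeled suffix of length $y$, and continue with the remaining middle as the active span. The Flashback decomposition $\mathcal{F}(s)$: let $\texttt{@},\texttt{\$}$ be distinct symbols not occurring in $s$, $\hat s=\texttt{@}\,s\,\texttt{\$}$ with positions $1,\dots,n+2$ ($n=|s|$), $\hat s[i..j)$ the substring at positions $i,\dots,j-1$. Starting from active span $[lo,hi)=[1,n+3)$: if $lo\ge hi$, stop. Let $\ell$ be the leading-run length of $\hat s[lo..hi)$. If $\ell=hi-lo$, append $(\hat s[lo..hi),0)$ and stop. Otherwise let $\hat s[r'..hi)$ be the trailing run of $\hat s[lo..hi)$ and $\sigma=\hat s[lo..lo+\ell)\cdot\hat s[r'..hi)$; if $lo+\ell\ge r'$, append $(\sigma,0)$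 and stop; otherwise append $(\sigma,\ell)$ and repeat with $[lo+\ell,r')$. *)

theory Defs
  imports Complex_Main
begin

text \<open>Number of maximal runs of a string (remdups_adj collapses each maximal run to one symbol).\<close>
definition runs :: "'a list \<Rightarrow> nat" where
  "runs s = length (remdups_adj s)"

definition lead_run :: "'a list \<Rightarrow> nat" where
  "lead_run xs = length (takeWhile (\<lambda>c. c = hd xs) xs)"

definition trail_run :: "'a list \<Rightarrow> nat" where
  "trail_run xs = length (takeWhile (\<lambda>c. c = last xs) (rev xs))"

datatype 'a token = Terminal "'a list" | Peeled "'a list" "'a list"

inductive admissible :: "'a list \<Rightarrow> 'a token list \<Rightarrow> bool" where
  terminate: "xs \<noteq> [] \<Longrightarrow> runs xs \<le> 2 \<Longrightarrow> admissible xs [Terminal xs]"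
| peel: "runs xs > 2 \<Longrightarrow> 1 \<le> x \<Longrightarrow> x \<le> lead_run xs \<Longrightarrow>
         1 \<le> y \<Longrightarrow> y \<le> trail_run xs \<Longrightarrow>
         admissible (drop x (take (length xs - y) xs)) ts \<Longrightarrow>
         admissible xs (Peeled (take x xs) (drop (length xs - y) xs) # ts)"

datatype 'a ext = At | Dollar | Sym 'a

text \<open>The substring at 1-based positions lo,...,hi-1.\<close>
definition substr :: "'b list \<Rightarrow> nat \<Rightarrow> nat \<Rightarrow> 'b list" where
  "substr w i j = take (j - i) (drop (i - 1) w)"

function flash :: "'b list \<Rightarrow> nat \<Rightarrow> nat \<Rightarrow> ('b list \<times> nat) list" where
  "flash w lo hi =
    (if lo = 0 \<or> lo \<ge> hi \<or> length w + 1 < hi then []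
     else let sp = substr w lo hi; l = lead_run sp in
       if l = hi - lo then [(sp, 0)]
       else let r' = hi - trail_run sp;
                \<sigma> = substr w lo (lo + l) @ substr w r' hi in
         if lo + l \<ge> r' then [(\<sigma>, 0)]
         else (\<sigma>, l) # flash w (lo + l) r')"
  by pat_completeness auto
termination
proof (relation "measure (\<lambda>(w, lo, hi). hi - lo)")
  fix w :: "'b list" and lo hi sp l r'
  assume a: "\<not> (lo = 0 \<or> hi \<le> lo \<or> length w + 1 < hi)" "sp = substr w lo hi" "l = lead_run sp" "r' = hi - trail_run sp"
    "\<not> lo + l \<ge> r'"
  then show "((w, lo + l, r'), w, lo, hi) \<in> measure (\<lambda>(w, lo, hi). hi - lo)"
  proof -
    have "sp \<noteq> []" using a by (auto simp: substr_def)
    then have "l \<ge> 1" unfolding a(3) by (cases sp) (auto simp: lead_run_def)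
    then show ?thesis using a by auto
  qed
qed auto

definition flashback :: "'a list \<Rightarrow> ('a ext list \<times> nat) list" where
  "flashback s = flash (At # map Sym s @ [Dollar]) 1 (length s + 3)"

definition sentinel_token :: "'a ext list \<times> nat" where
  "sentinel_token = ([At, Dollar], 1)"

end

theory Submission
  imports Defs
begin

text \<open>Peeling part of the leading run and part of the trailing run removes at most one run at
  each end, and a decomposition can only terminate on a span of at most two runs; so every
  admissible decomposition of a string with \<open>r\<close> runs has at least \<open>\<lceil>r/2\<rceil>\<close> tokens.
  Flashback always peels the whole leading and trailing runs, which removes exactly two runs as
  long as more than two remain, and emits a single token once at most two are left. After its
  first token, which peels off the sentinels @ and \<open>$\<close>, it therefore works on \<open>s\<close> itself and
  emits exactly \<open>\<lceil>r/2\<rceil>\<close> further tokens.\<close>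

lemma runs_replicate: "runs (replicate n a) = (if n = 0 then 0 else 1)"
  by (simp add: runs_def remdups_adj_replicate)

lemma runs_Cons_ge: "runs xs \<le> runs (x # xs)"
  by (auto simp: runs_def remdups_adj_Cons split: list.splits)

lemma runs_drop_le: "runs (drop k xs) \<le> runs xs"
proof (induction xs arbitrary: k)
  case (Cons x xs)
  then show ?case
    by (cases k) (auto intro: le_trans[OF _ runs_Cons_ge])
qed simp

lemma runs_append_le: "runs (xs @ ys) \<le> runs xs + runs ys"
proof (cases "xs = []")
  case False
  then show ?thesis
    using remdups_adj_append''[OF False, of ys] runs_drop_le
    by (simp add: runs_def dropWhile_eq_drop)
qed simp

lemma runs_append: "xs = [] \<or> ys = [] \<or> last xs \<noteq> hd ys \<Longrightarrow> runs (xs @ ys) = runs xs + runs ys"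
  by (simp add: runs_def remdups_adj_append')

lemma runs_map_inj: "inj f \<Longrightarrow> runs (map f xs) = runs xs"
  by (simp add: runs_def remdups_adj_map_injective)

lemma lead_run_le_length: "lead_run xs \<le> length xs"
  by (simp add: lead_run_def length_takeWhile_le)

lemma trail_run_eq_lead_run_rev: "trail_run xs = lead_run (rev xs)"
  by (cases xs rule: rev_cases) (auto simp: trail_run_def lead_run_def)

lemma trail_run_le_length: "trail_run xs \<le> length xs"
  using lead_run_le_length[of "rev xs"] by (simp add: trail_run_eq_lead_run_rev)

lemma lead_run_pos: "xs \<noteq> [] \<Longrightarrow> 0 < lead_run xs"
  by (cases xs) (auto simp: lead_run_def)

lemma trail_run_pos: "xs \<noteq> [] \<Longrightarrow> 0 < trail_run xs"
  using lead_run_pos[of "rev xs"] by (simp add: trail_run_eq_lead_run_rev)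

lemma takeWhile_eq_replicate: "takeWhile (\<lambda>c. c = a) xs = replicate (length (takeWhile (\<lambda>c. c = a) xs)) a"
  by (induction xs) auto

lemma take_lead_run: "x \<le> lead_run xs \<Longrightarrow> take x xs = replicate x (hd xs)"
proof -
  assume "x \<le> lead_run xs"
  then have "take x xs = take x (takeWhile (\<lambda>c. c = hd xs) xs)"
    by (metis lead_run_def min.absorb1 take_take takeWhile_eq_take)
  also have "\<dots> = replicate x (hd xs)"
    using \<open>x \<le> lead_run xs\<close> by (subst takeWhile_eq_replicate) (simp add: lead_run_def)
  finally show ?thesis .
qed

lemma drop_trail_run: "y \<le> trail_run xs \<Longrightarrow> drop (length xs - y) xs = replicate y (last xs)"
proof -
  assume y: "y \<le> trail_run xs"
  then have "y \<le> length xs" using trail_run_le_length order_trans by blast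
  then have "drop (length xs - y) xs = rev (take y (rev xs))"
    by (metis diff_diff_cancel rev_drop rev_rev_ident)
  also have "\<dots> = replicate y (hd (rev xs))"
    using y by (simp add: take_lead_run trail_run_eq_lead_run_rev)
  finally show ?thesis
    using \<open>y \<le> length xs\<close> by (cases "xs = []") (simp_all add: hd_rev)
qed

lemma hd_drop_lead_run: "lead_run xs < length xs \<Longrightarrow> hd (drop (lead_run xs) xs) \<noteq> hd xs"
proof -
  assume "lead_run xs < length xs"
  then have "drop (lead_run xs) xs \<noteq> []" by simp
  moreover have "drop (lead_run xs) xs = dropWhile (\<lambda>c. c = hd xs) xs"
    by (simp add: lead_run_def dropWhile_eq_drop)
  ultimately have "dropWhile (\<lambda>c. c = hd xs) xs \<noteq> []" by simp
  from hd_dropWhile[OF this] show ?thesis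
    by (simp add: lead_run_def dropWhile_eq_drop)
qed

lemma last_take_trail_run:
  assumes "trail_run xs < length xs"
  shows "last (take (length xs - trail_run xs) xs) \<noteq> last xs"
proof -
  have "hd (drop (lead_run (rev xs)) (rev xs)) \<noteq> hd (rev xs)"
    using assms by (intro hd_drop_lead_run) (simp add: trail_run_eq_lead_run_rev)
  moreover have "drop (lead_run (rev xs)) (rev xs) = rev (take (length xs - trail_run xs) xs)"
    using lead_run_le_length[of "rev xs"] by (simp add: rev_take trail_run_eq_lead_run_rev)
  ultimately show ?thesis
    using assms by (simp add: hd_rev)
qed

lemma take_append_middle_append_drop:
  assumes "x + y \<le> length xs"
  shows "take x xs @ drop x (take (length xs - y) xs) @ drop (length xs - y) xs = xs"
proof -
  have "take x (take (length xs - y) xs) = take x xs"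
    using assms by (simp add: min_absorb1)
  then show ?thesis
    by (metis append_assoc append_take_drop_id)
qed

lemma runs_le_peeled_middle_add_2:
  assumes x: "x \<le> lead_run xs" and y: "y \<le> trail_run xs"
  shows "runs xs \<le> runs (drop x (take (length xs - y) xs)) + 2"
proof (cases "x + y \<le> length xs")
  case True
  let ?m = "drop x (take (length xs - y) xs)"
  have "runs xs = runs (take x xs @ ?m @ drop (length xs - y) xs)"
    using take_append_middle_append_drop[OF True] by simp
  also have "\<dots> \<le> runs (take x xs) + (runs ?m + runs (drop (length xs - y) xs))"
    by (meson add_left_mono order_trans runs_append_le)
  also have "\<dots> \<le> runs ?m + 2"
    using x y by (simp add: take_lead_run drop_trail_run runs_replicate)
  finally show ?thesis .
next
  case False
  \<comment> \<open>the two peels overlap, so \<open>xs\<close> is a prefix of its leading run followed by a suffix of its trailing run\<close>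
  have "x \<le> length xs" using x lead_run_le_length order_trans by blast
  with False y have "drop x xs = replicate (length xs - x) (last xs)"
    using drop_trail_run[of "length xs - x" xs] by simp
  then have "runs xs \<le> runs (take x xs) + runs (replicate (length xs - x) (last xs))"
    by (metis append_take_drop_id runs_append_le)
  then show ?thesis
    using x by (simp add: take_lead_run runs_replicate split: if_splits)
qed

lemma runs_eq_1_if_lead_run_eq_length:
  "xs \<noteq> [] \<Longrightarrow> lead_run xs = length xs \<Longrightarrow> runs xs = 1"
  by (metis length_0_conv order_refl runs_replicate take_all take_lead_run)

lemma runs_eq_2_if_lead_and_trail_run_cover:
  assumes "lead_run xs < length xs" "length xs \<le> lead_run xs + trail_run xs"
  shows "runs xs = 2"
proof -
  let ?l = "lead_run xs"
  have "xs \<noteq> []" using assms(1) by auto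
  have "take ?l xs = replicate ?l (hd xs)" by (simp add: take_lead_run)
  moreover have "drop ?l xs = replicate (length xs - ?l) (last xs)"
    using assms drop_trail_run[of "length xs - ?l" xs] by simp
  moreover have "last (take ?l xs) \<noteq> hd (drop ?l xs)"
    using hd_drop_lead_run[OF assms(1)] lead_run_pos[OF \<open>xs \<noteq> []\<close>] assms(1)
    by (simp add: take_lead_run)
  ultimately have "runs (take ?l xs @ drop ?l xs) = 2"
    using lead_run_pos[OF \<open>xs \<noteq> []\<close>] assms(1) by (simp add: runs_append runs_replicate)
  then show ?thesis by simp
qed

lemma runs_eq_max_peeled_middle_add_2:
  assumes "lead_run xs + trail_run xs < length xs"
  shows "runs xs = runs (drop (lead_run xs) (take (length xs - trail_run xs) xs)) + 2"
proof -
  let ?l = "lead_run xs" and ?t = "trail_run xs"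
  let ?p = "take ?l xs" and ?m = "drop ?l (take (length xs - ?t) xs)" and ?q = "drop (length xs - ?t) xs"
  have "xs \<noteq> []" using assms by auto
  have p: "?p = replicate ?l (hd xs)" "0 < ?l"
    using lead_run_pos[OF \<open>xs \<noteq> []\<close>] by (simp_all add: take_lead_run)
  have q: "?q = replicate ?t (last xs)" "0 < ?t"
    using trail_run_pos[OF \<open>xs \<noteq> []\<close>] by (simp_all add: drop_trail_run)
  have "?m \<noteq> []" using assms by simp
  have "hd ?m = hd (drop ?l xs)"
    using assms by (simp add: hd_drop_conv_nth)
  then have "last ?p \<noteq> hd ?m"
    using p hd_drop_lead_run[of xs] assms by simp
  moreover have "last ?m \<noteq> hd ?q"
    using q last_take_trail_run[of xs] assms by (simp add: last_drop)
  ultimately have "runs (?p @ ?m @ ?q) = runs ?p + (runs ?m + runs ?q)"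
    using \<open>?m \<noteq> []\<close> by (simp add: runs_append)
  then show ?thesis
    using take_append_middle_append_drop[of ?l ?t xs] assms p q by (simp add: runs_replicate)
qed

lemma admissible_runs_le: "admissible xs ts \<Longrightarrow> runs xs \<le> 2 * length ts"
proof (induction rule: admissible.induct)
  case (peel xs x y ts)
  then show ?case
    using runs_le_peeled_middle_add_2[of x xs y] by simp
qed simp

lemma nat_ceiling_half: "nat \<lceil>real r / 2\<rceil> = (r + 1) div 2"
proof (cases "even r")
  case True
  then show ?thesis by (auto elim: evenE)
next
  case False
  then obtain k where k: "r = 2 * k + 1" by (auto elim: oddE)
  have "\<lceil>real r / 2\<rceil> = int k + 1"
    by (rule ceiling_unique) (simp_all add: k)
  then show ?thesis using k by simp
qed

declare flash.simps [simp del]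

lemma length_substr: "1 \<le> i \<Longrightarrow> j \<le> length w + 1 \<Longrightarrow> length (substr w i j) = j - i"
  by (simp add: substr_def)

lemma substr_inner:
  assumes "1 \<le> i" "i + a + b \<le> j" "j \<le> length w + 1"
  shows "substr w (i + a) (j - b) = drop a (take (length (substr w i j) - b) (substr w i j))"
  using assms by (simp add: length_substr) (simp add: substr_def drop_take add_ac)

lemma flash_unfold:
  assumes "1 \<le> lo" "lo < hi" "hi \<le> length w + 1"
  shows "flash w lo hi =
    (let sp = substr w lo hi; l = lead_run sp; t = trail_run sp;
         \<sigma> = take l sp @ drop (length sp - t) sp
     in if l = length sp then [(sp, 0)]
        else if length sp \<le> l + t then [(\<sigma>, 0)]
        else (\<sigma>, l) # flash w (lo + l) (hi - t))"
proof -
  define sp where "sp = substr w lo hi"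
  have len: "length sp = hi - lo"
    using assms by (simp add: sp_def length_substr)
  have "substr w lo (lo + lead_run sp) = take (lead_run sp) sp"
    using lead_run_le_length[of sp] len by (simp add: sp_def substr_def min_def)
  moreover have "substr w (hi - trail_run sp) hi = drop (length sp - trail_run sp) sp"
    using trail_run_le_length[of sp] len assms by (simp add: sp_def substr_def drop_take add.commute)
  moreover have "hi - trail_run sp \<le> lo + lead_run sp \<longleftrightarrow> length sp \<le> lead_run sp + trail_run sp"
    using trail_run_le_length[of sp] len by linarith
  ultimately show ?thesis
    using assms len by (subst flash.simps) (simp add: Let_def sp_def[symmetric])
qed

lemma length_flash:
  "1 \<le> lo \<Longrightarrow> lo < hi \<Longrightarrow> hi \<le> length w + 1 \<Longrightarrow>
   length (flash w lo hi) = (runs (substr w lo hi) + 1) div 2"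
proof (induction w lo hi rule: flash.induct)
  case (1 w lo hi)
  define sp where "sp = substr w lo hi"
  let ?l = "lead_run sp" and ?t = "trail_run sp"
  have len: "length sp = hi - lo"
    using "1.prems" by (simp add: sp_def length_substr)
  then have "sp \<noteq> []"
    using "1.prems" by auto
  consider (one_run) "?l = length sp" | (two_runs) "?l < length sp" "length sp \<le> ?l + ?t"
    | (more_runs) "?l + ?t < length sp"
    using lead_run_le_length[of sp] by linarith
  then show ?case
  proof cases
    case one_run
    then show ?thesis
      using \<open>sp \<noteq> []\<close> "1.prems" runs_eq_1_if_lead_run_eq_length[of sp]
      by (simp add: flash_unfold Let_def sp_def[symmetric])
  next
    case two_runs
    then show ?thesis
      using "1.prems" runs_eq_2_if_lead_and_trail_run_cover[of sp]
      by (simp add: flash_unfold Let_def sp_def[symmetric])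
  next
    case more_runs
    have "length (flash w (lo + ?l) (hi - ?t)) = (runs (substr w (lo + ?l) (hi - ?t)) + 1) div 2"
      by (rule "1.IH"[OF _ sp_def refl _ refl refl]) (use "1.prems" more_runs len in \<open>simp_all add: sp_def\<close>)
    moreover have "substr w (lo + ?l) (hi - ?t) = drop ?l (take (length sp - ?t) sp)"
      using substr_inner[of lo ?l ?t hi w] "1.prems" more_runs len by (simp add: sp_def)
    ultimately show ?thesis
      using "1.prems" more_runs runs_eq_max_peeled_middle_add_2[of sp]
      by (simp add: flash_unfold Let_def sp_def[symmetric])
  qed
qed

lemma set_fst_flash_subset:
  "1 \<le> lo \<Longrightarrow> lo < hi \<Longrightarrow> hi \<le> length w + 1 \<Longrightarrow> tok \<in> set (flash w lo hi) \<Longrightarrow>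
   set (fst tok) \<subseteq> set (substr w lo hi)"
proof (induction w lo hi rule: flash.induct)
  case (1 w lo hi)
  define sp where "sp = substr w lo hi"
  let ?l = "lead_run sp" and ?t = "trail_run sp"
  let ?\<sigma> = "take ?l sp @ drop (length sp - ?t) sp"
  have len: "length sp = hi - lo"
    using "1.prems" by (simp add: sp_def length_substr)
  have \<sigma>: "set ?\<sigma> \<subseteq> set sp"
    by (auto dest: in_set_takeD in_set_dropD)
  show ?case
  proof (cases "?l + ?t < length sp")
    case True
    have "tok \<in> set (flash w (lo + ?l) (hi - ?t)) \<Longrightarrow> set (fst tok) \<subseteq> set (substr w (lo + ?l) (hi - ?t))"
      by (rule "1.IH"[OF _ sp_def refl _ refl refl]) (use "1.prems" True len in \<open>simp_all add: sp_def\<close>)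
    moreover have "substr w (lo + ?l) (hi - ?t) = drop ?l (take (length sp - ?t) sp)"
      using substr_inner[of lo ?l ?t hi w] "1.prems" True len by (simp add: sp_def)
    moreover have "set (drop ?l (take (length sp - ?t) sp)) \<subseteq> set sp"
      by (auto dest: in_set_takeD in_set_dropD)
    ultimately show ?thesis
      using "1.prems" True \<sigma> by (auto simp: flash_unfold Let_def sp_def[symmetric])
  next
    case False
    then show ?thesis
      using "1.prems" \<sigma> by (auto simp: flash_unfold Let_def sp_def[symmetric] split: if_splits)
  qed
qed

lemma flashback_eq:
  assumes "s \<noteq> []"
  shows "flashback s = sentinel_token # flash (At # map Sym s @ [Dollar]) 2 (length s + 2)"
proof -
  let ?w = "At # map Sym s @ [Dollar]"
  have "lead_run ?w = 1"
    by (cases s) (simp_all add: lead_run_def)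
  moreover have "trail_run ?w = 1"
    by (cases "rev s") (simp_all add: trail_run_def rev_map)
  moreover have "substr ?w 1 (length s + 3) = ?w"
    by (simp add: substr_def)
  ultimately have "flash ?w 1 (length s + 3) = sentinel_token # flash ?w 2 (length s + 2)"
    using assms by (subst flash_unfold) (simp_all add: Let_def sentinel_token_def numeral_2_eq_2)
  then show ?thesis
    by (simp add: flashback_def)
qed

lemma filter_sentinel_flashback:
  assumes "s \<noteq> []"
  shows "filter (\<lambda>t. t \<noteq> sentinel_token) (flashback s)
    = flash (At # map Sym s @ [Dollar]) 2 (length s + 2)"
proof -
  let ?w = "At # map Sym s @ [Dollar]" and ?n = "length s"
  have "substr ?w 2 (?n + 2) = map Sym s"
    by (simp add: substr_def)
  then have "\<forall>tok\<in>set (flash ?w 2 (?n + 2)). At \<notin> set (fst tok)"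
    using set_fst_flash_subset[of 2 "?n + 2" ?w] assms by fastforce
  then have "\<forall>tok\<in>set (flash ?w 2 (?n + 2)). tok \<noteq> sentinel_token"
    by (auto simp: sentinel_token_def)
  then show ?thesis
    using assms by (simp add: flashback_eq filter_id_conv)
qed

theorem theorem6p4:
  fixes s :: "'a list"
  assumes "s \<noteq> []"
  shows "(\<forall>ts. admissible s ts \<longrightarrow> nat \<lceil>real (runs s) / 2\<rceil> \<le> length ts)
       \<and> length (filter (\<lambda>t. t \<noteq> sentinel_token) (flashback s)) = nat \<lceil>real (runs s) / 2\<rceil>"
proof
  show "\<forall>ts. admissible s ts \<longrightarrow> nat \<lceil>real (runs s) / 2\<rceil> \<le> length ts"
    by (auto simp: nat_ceiling_half dest!: admissible_runs_le)
next
  have "substr (At # map Sym s @ [Dollar]) 2 (length s + 2) = map Sym s"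
    by (simp add: substr_def)
  moreover have "runs (map Sym s) = runs s"
    by (simp add: runs_map_inj inj_def)
  ultimately show "length (filter (\<lambda>t. t \<noteq> sentinel_token) (flashback s)) = nat \<lceil>real (runs s) / 2\<rceil>"
    using assms length_flash[of 2 "length s + 2" "At # map Sym s @ [Dollar]"]
    by (simp add: filter_sentinel_flashback nat_ceiling_half)
qed

end
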